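(* Let $z\in\mathbb{R}^n$ satisfy $\dim\big(\Diamond_n\cap(z+\Diamond_n)\big)=n$. Then $$\big(\Diamond_n\cap(z+\Diamond_n)\big)\setminus\big(\operatorname{int}(\Diamond_n)\cup\operatorname{int}(z+\Diamond_n)\big)\subset\big(\Diamond_n\cap(z+\Diamond_n)\big)\setminus\bigcap_{i=1}^n\big(H^{(i)}\cup(z+H^{(i)})\big).$$
   Context: $\Diamond_n=\operatorname{conv}(\pm e_1,\ldots,\pm e_n)\subset\mathbb{R}^n$; $\operatorname{int}$ denotes interior; $H^{(i)}=\{x\in\mathbb{R}^n: x_i=0\}$ is the $i$-th coordinate hyperplane, the span of $e_j$, $j\ne i$. *)

theory Defs
  imports "HOL-Analysis.Analysis"
begin

definition cross_polytope :: "(real ^ 'n) set" where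
  "cross_polytope = convex hull ((\<lambda>i. axis i 1) ` UNIV \<union> (\<lambda>i. axis i (-1)) ` UNIV)"

definition coord_hyperplane :: "'n \<Rightarrow> (real ^ 'n) set" where
  "coord_hyperplane i = {x. x $ i = 0}"

end

theory Submission
  imports Defs
begin

text \<open>The cross-polytope is the closed unit ball of the \<open>\<ell>\<^sub>1\<close>-norm. A point of the
intersection lying in neither interior therefore has \<open>\<parallel>x\<parallel>\<^sub>1 = \<parallel>x - z\<parallel>\<^sub>1 = 1\<close>. If moreover
every coordinate satisfies \<open>x\<^sub>i = 0\<close> or \<open>x\<^sub>i = z\<^sub>i\<close>, then \<open>\<parallel>z\<parallel>\<^sub>1 = \<parallel>x\<parallel>\<^sub>1 + \<parallel>x - z\<parallel>\<^sub>1 = 2\<close>.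
But two unit \<open>\<ell>\<^sub>1\<close>-balls whose centres are at distance 2 touch only inside the hyperplane
\<open>sgn(z) \<bullet> y = 1\<close>, so the intersection would not be full-dimensional.\<close>

definition l1_norm :: "real ^ 'n \<Rightarrow> real" where
  "l1_norm x = (\<Sum>i\<in>UNIV. \<bar>x $ i\<bar>)"

lemma l1_norm_minus_commute: "l1_norm (x - y) = l1_norm (y - x)"
  unfolding l1_norm_def by (intro sum.cong) auto

lemma l1_norm_axis: "l1_norm (axis i c :: real ^ 'n) = \<bar>c\<bar>"
proof -
  have "l1_norm (axis i c :: real ^ 'n) = (\<Sum>j\<in>UNIV. if j = i then \<bar>c\<bar> else 0)"
    unfolding l1_norm_def by (intro sum.cong) (auto simp: axis_def)
  then show ?thesis by simp
qed

lemma convex_l1_ball: "convex {x :: real ^ 'n. l1_norm x \<le> r}"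
proof (rule convexI)
  fix x y :: "real ^ 'n" and u v :: real
  assume x: "x \<in> {x. l1_norm x \<le> r}" and y: "y \<in> {x. l1_norm x \<le> r}"
    and u: "0 \<le> u" and v: "0 \<le> v" and uv: "u + v = 1"
  have "l1_norm (u *\<^sub>R x + v *\<^sub>R y) \<le> (\<Sum>i\<in>UNIV. u * \<bar>x $ i\<bar> + v * \<bar>y $ i\<bar>)"
    unfolding l1_norm_def
  proof (rule sum_mono)
    fix i
    have "\<bar>u * x $ i + v * y $ i\<bar> \<le> \<bar>u * x $ i\<bar> + \<bar>v * y $ i\<bar>" by (rule abs_triangle_ineq)
    then show "\<bar>(u *\<^sub>R x + v *\<^sub>R y) $ i\<bar> \<le> u * \<bar>x $ i\<bar> + v * \<bar>y $ i\<bar>"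
      using u v by (simp add: abs_mult)
  qed
  also have "\<dots> = u * l1_norm x + v * l1_norm y"
    by (simp add: l1_norm_def sum.distrib sum_distrib_left)
  also have "\<dots> \<le> u * r + v * r" using x y u v by (intro add_mono mult_left_mono) auto
  also have "\<dots> = r" using uv by (metis distrib_right mult_1)
  finally show "u *\<^sub>R x + v *\<^sub>R y \<in> {x. l1_norm x \<le> r}" by simp
qed

lemma convex_sum_le_1:
  fixes S :: "'a::real_vector set"
  assumes "convex S" "0 \<in> S" "finite A" "\<And>i. i \<in> A \<Longrightarrow> u i \<ge> 0" "sum u A \<le> 1"
    "\<And>i. i \<in> A \<Longrightarrow> p i \<in> S"
  shows "(\<Sum>i\<in>A. u i *\<^sub>R p i) \<in> S"
proof (cases "sum u A = 0")
  case True
  then have "\<forall>i\<in>A. u i = 0" using sum_nonneg_eq_0_iff assms(3,4) by blast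
  then show ?thesis using assms(2) by simp
next
  case False
  define t where "t = sum u A"
  have t: "t > 0" using False assms(4) sum_nonneg unfolding t_def by (metis less_eq_real_def)
  have "(\<Sum>i\<in>A. (u i / t) *\<^sub>R p i) \<in> S"
    using t assms by (intro convex_sum) (auto simp: t_def sum_divide_distrib[symmetric])
  then have "t *\<^sub>R (\<Sum>i\<in>A. (u i / t) *\<^sub>R p i) + (1 - t) *\<^sub>R 0 \<in> S"
    using convexD[OF assms(1) _ assms(2), of _ t "1 - t"] t assms(5) t_def by auto
  moreover have "t *\<^sub>R (\<Sum>i\<in>A. (u i / t) *\<^sub>R p i) = (\<Sum>i\<in>A. u i *\<^sub>R p i)"
    using t by (simp add: scaleR_sum_right)
  ultimately show ?thesis by simp
qed

lemma zero_in_cross_polytope: "(0 :: real ^ 'n) \<in> cross_polytope"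
proof -
  obtain i :: 'n where True by simp
  have "(1/2) *\<^sub>R axis i (1::real) + (1/2) *\<^sub>R axis i (-1) \<in> cross_polytope"
    unfolding cross_polytope_def by (intro convexD convex_convex_hull hull_inc) auto
  moreover have "(1/2) *\<^sub>R axis i (1::real) + (1/2) *\<^sub>R axis i (-1) = (0 :: real ^ 'n)"
    by (simp add: axis_def vec_eq_iff)
  ultimately show ?thesis by simp
qed

lemma cross_polytope_eq_l1_ball: "cross_polytope = {x :: real ^ 'n. l1_norm x \<le> 1}"
proof
  show "cross_polytope \<subseteq> {x :: real ^ 'n. l1_norm x \<le> 1}"
    unfolding cross_polytope_def
    by (rule hull_minimal) (auto simp: l1_norm_axis convex_l1_ball)
next
  show "{x :: real ^ 'n. l1_norm x \<le> 1} \<subseteq> cross_polytope"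
  proof
    fix x :: "real ^ 'n"
    assume "x \<in> {x. l1_norm x \<le> 1}"
    then have x: "l1_norm x \<le> 1" by simp
    define p where "p i = (if x $ i \<ge> 0 then axis i 1 else axis i (-1) :: real ^ 'n)" for i
    have "(\<Sum>i\<in>UNIV. \<bar>x $ i\<bar> *\<^sub>R p i) \<in> cross_polytope"
      using x zero_in_cross_polytope
      by (intro convex_sum_le_1)
        (auto simp: l1_norm_def p_def cross_polytope_def intro: hull_inc)
    moreover have "(\<Sum>i\<in>UNIV. \<bar>x $ i\<bar> *\<^sub>R p i) = x"
    proof -
      have "(\<Sum>i\<in>UNIV. \<bar>x $ i\<bar> *\<^sub>R p i) = (\<Sum>i\<in>UNIV. x $ i *\<^sub>R axis i 1)"
        by (intro sum.cong) (auto simp: p_def axis_def vec_eq_iff)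
      also have "\<dots> = x"
        by (simp add: vec_eq_iff sum_component axis_def if_distrib cong: if_cong)
      finally show ?thesis .
    qed
    ultimately show "x \<in> cross_polytope" by simp
  qed
qed

lemma l1_norm_eq_1_if_boundary:
  assumes "x \<in> cross_polytope - interior cross_polytope"
  shows "l1_norm x = 1"
proof -
  have "open {x :: real ^ 'n. l1_norm x < 1}"
    unfolding l1_norm_def by (intro open_Collect_less continuous_intros)
  then have "{x :: real ^ 'n. l1_norm x < 1} \<subseteq> interior cross_polytope"
    by (intro interior_maximal) (auto simp: cross_polytope_eq_l1_ball)
  with assms show ?thesis by (force simp: cross_polytope_eq_l1_ball)
qed

lemma l1_norm_eq_sum_if_coordinatewise_between:
  assumes "\<And>i. x $ i = 0 \<or> x $ i = z $ i"
  shows "l1_norm z = l1_norm x + l1_norm (x - z)"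
proof -
  have "\<bar>z $ i\<bar> = \<bar>x $ i\<bar> + \<bar>(x - z) $ i\<bar>" for i
    using assms[of i] by auto
  then show ?thesis by (simp add: l1_norm_def sum.distrib)
qed

lemma inner_sgn_le_l1_norm: "(\<chi> i. sgn (z $ i)) \<bullet> y \<le> l1_norm y"
  unfolding inner_vec_def l1_norm_def by (intro sum_mono) (simp add: sgn_if abs_if)

lemma inner_sgn_self: "(\<chi> i. sgn (z $ i)) \<bullet> z = l1_norm z"
  by (simp add: inner_vec_def l1_norm_def sgn_mult_self_eq abs_sgn mult.commute)

lemma l1_balls_touch_in_hyperplane:
  assumes "l1_norm z = 2 * r"
  shows "{x. l1_norm x \<le> r} \<inter> {x. l1_norm (x - z) \<le> r} \<subseteq> {y. (\<chi> i. sgn (z $ i)) \<bullet> y = r}"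
proof
  fix y assume y: "y \<in> {x. l1_norm x \<le> r} \<inter> {x. l1_norm (x - z) \<le> r}"
  let ?s = "\<chi> i. sgn (z $ i)"
  have "?s \<bullet> y \<le> r" using inner_sgn_le_l1_norm[of z y] y by simp
  moreover have "?s \<bullet> (z - y) \<le> r"
    using inner_sgn_le_l1_norm[of z "z - y"] y l1_norm_minus_commute[of y z] by simp
  then have "?s \<bullet> y \<ge> r"
    using assms inner_sgn_self[of z] by (simp add: inner_diff_right)
  ultimately show "y \<in> {y. ?s \<bullet> y = r}" by simp
qed

lemma aff_dim_cross_polytope_inter_lt:
  fixes z :: "real ^ 'n"
  assumes "l1_norm z = 2"
  shows "aff_dim (cross_polytope \<inter> (+) z ` cross_polytope) < int CARD('n)"
proof -
  let ?s = "\<chi> i. sgn (z $ i)"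
  have "(+) z ` cross_polytope = {x. l1_norm (x - z) \<le> 1}"
    by (force simp: cross_polytope_eq_l1_ball)
  then have "cross_polytope \<inter> (+) z ` cross_polytope \<subseteq> {y. ?s \<bullet> y = 1}"
    using l1_balls_touch_in_hyperplane[of z 1] assms by (simp add: cross_polytope_eq_l1_ball)
  then have "aff_dim (cross_polytope \<inter> (+) z ` cross_polytope) \<le> aff_dim {y. ?s \<bullet> y = 1}"
    by (rule aff_dim_subset)
  also have "\<dots> = int CARD('n) - 1"
  proof -
    have "?s \<noteq> 0" using assms inner_sgn_self[of z] by auto
    then show ?thesis using aff_dim_hyperplane[of ?s 1] by simp
  qed
  finally show ?thesis by simp
qed

theorem lemma6p3:
  fixes z :: "real ^ 'n"
  assumes "aff_dim (cross_polytope \<inter> ((+) z ` cross_polytope)) = int CARD('n)"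
  shows "(cross_polytope \<inter> ((+) z ` cross_polytope))
           - (interior cross_polytope \<union> interior ((+) z ` cross_polytope))
         \<subseteq> (cross_polytope \<inter> ((+) z ` cross_polytope))
           - (\<Inter>i. coord_hyperplane i \<union> (+) z ` coord_hyperplane i)"
proof (intro subsetI DiffI)
  fix x
  assume x: "x \<in> (cross_polytope \<inter> ((+) z ` cross_polytope))
    - (interior cross_polytope \<union> interior ((+) z ` cross_polytope))"
  then show "x \<in> cross_polytope \<inter> ((+) z ` cross_polytope)" by simp
  have "l1_norm x = 1"
    using x by (intro l1_norm_eq_1_if_boundary) simp
  moreover have "l1_norm (x - z) = 1"
    using x by (intro l1_norm_eq_1_if_boundary) (force simp: interior_translation)
  ultimately have z_not_split: "l1_norm z \<noteq> l1_norm x + l1_norm (x - z)"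
    using assms aff_dim_cross_polytope_inter_lt[of z] by auto
  show "x \<notin> (\<Inter>i. coord_hyperplane i \<union> (+) z ` coord_hyperplane i)"
  proof
    assume "x \<in> (\<Inter>i. coord_hyperplane i \<union> (+) z ` coord_hyperplane i)"
    then have "x $ i = 0 \<or> x $ i = z $ i" for i
      by (auto simp: coord_hyperplane_def)
    then show False
      using l1_norm_eq_sum_if_coordinatewise_between z_not_split by blast
  qed
qed

end
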